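(* Let $(X,S_b)$ be an $S_b$-metric space with $b\geq 1$, let $x_1,x_2\in X$, and let $f:X\to X$ be a self-mapping for which there exist $\alpha\in(0,1)$ and a non-decreasing function $\varphi:(0,\infty)\to(1,\infty)$ such that for all $x\in X\setminus\{x_1,x_2\}$, $$S_b(x,x,fx)>0 \implies \varphi\big(S_b(x,x,fx)\big)\leq \big[\varphi\big(S_b(x,x,x_1)\,S_b(x,x,x_2)\big)\big]^{\alpha}$$ (i.e. $f$ is a Jleli-Samet type $C_{x_1,x_2}$-$S_b$-contraction). Let $$r=\inf\{S_b(x,x,fx): x\neq fx,\ x\in X\}.$$ If $fx_1=x_1$ and $fx_2=x_2$, then $f$ fixes the Cassini curve $C^{S_b}_r(x_1,x_2)=\{x\in X: S_b(x,x,x_1)\,S_b(x,x,x_2)=r\}$, i.e. $fx=x$ for every $x\in C^{S_b}_r(x_1,x_2)$.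
   Context: An $S_b$-metric space $(X,S_b)$ with constant $b\geq 1$ is a nonempty set $X$ with a function $S_b:X\times X\times X\to[0,\infty)$ such that for all $x,y,z,a\in X$: (1) $S_b(x,y,z)=0$ if and only if $x=y=z$; (2) $S_b(x,y,z)\leq b[S_b(x,x,a)+S_b(y,y,a)+S_b(z,z,a)]$. A mapping $f$ fixes a set $\mathcal{F}\subseteq X$ if $\mathcal{F}$ is contained in the fixed point set $\{x\in X: fx=x\}$. *)

theory Defs
  imports Main Complex_Main
begin

definition Sb_metric :: "('a \<Rightarrow> 'a \<Rightarrow> 'a \<Rightarrow> real) \<Rightarrow> real \<Rightarrow> bool" where
  "Sb_metric S b \<longleftrightarrow> b \<ge> 1 \<and>
     (\<forall>x y z. S x y z \<ge> 0) \<and>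
     (\<forall>x y z. S x y z = 0 \<longleftrightarrow> x = y \<and> y = z) \<and>
     (\<forall>x y z a. S x y z \<le> b * (S x x a + S y y a + S z z a))"

definition cassini_curve :: "('a \<Rightarrow> 'a \<Rightarrow> 'a \<Rightarrow> real) \<Rightarrow> real \<Rightarrow> 'a \<Rightarrow> 'a \<Rightarrow> 'a set" where
  "cassini_curve S r x1 x2 = {x. S x x x1 * S x x x2 = r}"

definition fixes_set :: "('a \<Rightarrow> 'a) \<Rightarrow> 'a set \<Rightarrow> bool" where
  "fixes_set f F \<longleftrightarrow> F \<subseteq> {x. f x = x}"

end

theory Submission
  imports Defs
begin

text \<open>If a point x on the curve were not fixed, the contraction would make its displacement
  S x x (f x) strictly smaller than S x x x1 * S x x x2 = r; but r is the infimum of all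
  positive displacements.\<close>

lemma Sb_metric_nonneg: "Sb_metric S b \<Longrightarrow> 0 \<le> S x y z"
  unfolding Sb_metric_def by blast

lemma Sb_metric_pos: "Sb_metric S b \<Longrightarrow> x \<noteq> y \<Longrightarrow> 0 < S x x y"
  unfolding Sb_metric_def by (metis less_eq_real_def)

lemma Sb_metric_Inf_le:
  assumes "Sb_metric S b" and "x \<noteq> f x"
  shows "Inf {S y y (f y) | y. y \<noteq> f y} \<le> S x x (f x)"
proof (rule cInf_lower)
  show "bdd_below {S y y (f y) | y. y \<noteq> f y}"
    unfolding bdd_below_def using Sb_metric_nonneg[OF assms(1)] by blast
qed (use assms(2) in blast)

lemma jleli_samet_less:
  fixes \<phi> :: "real \<Rightarrow> real"
  assumes phi_range: "\<forall>t>0. \<phi> t > 1" and phi_mono: "mono_on {0<..} \<phi>"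
    and "\<alpha> < 1" and "0 < s" and "0 < t"
    and le: "\<phi> t \<le> \<phi> s powr \<alpha>"
  shows "t < s"
proof (rule ccontr)
  assume "\<not> t < s"
  have "1 < \<phi> s"
    using phi_range \<open>0 < s\<close> by simp
  from \<open>\<not> t < s\<close> have "\<phi> s \<le> \<phi> t"
    using phi_mono \<open>0 < s\<close> \<open>0 < t\<close> by (auto simp: mono_on_def)
  also have "\<dots> \<le> \<phi> s powr \<alpha>" by (fact le)
  also have "\<dots> < \<phi> s powr 1"
    using \<open>1 < \<phi> s\<close> \<open>\<alpha> < 1\<close> by (intro powr_less_mono)
  finally show False
    using \<open>1 < \<phi> s\<close> by simp
qed

theorem theorem2p14:
  fixes S :: "'a \<Rightarrow> 'a \<Rightarrow> 'a \<Rightarrow> real" and b :: real and f :: "'a \<Rightarrow> 'a"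
    and x1 x2 :: 'a and \<alpha> :: real and \<phi> :: "real \<Rightarrow> real"
  assumes Sb: "Sb_metric S b"
    and alpha: "0 < \<alpha>" "\<alpha> < 1"
    and phi_range: "\<forall>t>0. \<phi> t > 1"
    and phi_mono: "mono_on {0<..} \<phi>"
    and contr: "\<forall>x. x \<notin> {x1, x2} \<longrightarrow> S x x (f x) > 0 \<longrightarrow>
                  \<phi> (S x x (f x)) \<le> (\<phi> (S x x x1 * S x x x2)) powr \<alpha>"
    and fx1: "f x1 = x1" and fx2: "f x2 = x2"
  shows "fixes_set f (cassini_curve S (Inf {S x x (f x) | x. x \<noteq> f x}) x1 x2)"
  unfolding fixes_set_def cassini_curve_def
proof (rule subsetI, rule CollectI, rule ccontr)
  fix x
  assume "x \<in> {x. S x x x1 * S x x x2 = Inf {S x x (f x) | x. x \<noteq> f x}}"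
    and moved: "f x \<noteq> x"
  then have on_curve: "S x x x1 * S x x x2 = Inf {S y y (f y) | y. y \<noteq> f y}"
    by simp
  have "x \<noteq> x1" "x \<noteq> x2"
    using moved fx1 fx2 by auto
  then have "0 < S x x x1 * S x x x2"
    using Sb_metric_pos[OF Sb] by simp
  moreover have "0 < S x x (f x)"
    using Sb_metric_pos[OF Sb] moved by simp
  moreover have "\<phi> (S x x (f x)) \<le> \<phi> (S x x x1 * S x x x2) powr \<alpha>"
    using contr \<open>x \<noteq> x1\<close> \<open>x \<noteq> x2\<close> \<open>0 < S x x (f x)\<close> by simp
  ultimately have "S x x (f x) < S x x x1 * S x x x2"
    by (rule jleli_samet_less[OF phi_range phi_mono alpha(2)])
  also have "\<dots> \<le> S x x (f x)"
    unfolding on_curve using Sb_metric_Inf_le[OF Sb] moved by simp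
  finally show False by simp
qed

end
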